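(* Let $\lambda_1\ge\lambda_2>0$ and $D=\mathrm{diag}(\lambda_1,\lambda_2)$. The critical points of $\widetilde W_{1,0}(\cdot;D)$ on $SO(2)$ are exactly $R^{(1)}=\mathbb I_2$, $R^{(2)}=-\mathbb I_2$, and, in addition when $\lambda_1+\lambda_2>2$, the two rotations $$R^{(3)}_\pm=\begin{pmatrix}\frac{2}{\lambda_1+\lambda_2} & \mp\sqrt{1-\big(\frac{2}{\lambda_1+\lambda_2}\big)^2}\\ \pm\sqrt{1-\big(\frac{2}{\lambda_1+\lambda_2}\big)^2} & \frac{2}{\lambda_1+\lambda_2}\end{pmatrix},$$ with values $\widetilde W_{1,0}(R^{(1)};D)=(\lambda_1-1)^2+(\lambda_2-1)^2$, $\widetilde W_{1,0}(R^{(2)};D)=(\lambda_1+1)^2+(\lambda_2+1)^2$, $\widetilde W_{1,0}(R^{(3)}_\pm;D)=\frac12(\lambda_1-\lambda_2)^2$. Moreover: (i) $R^{(2)}$ is the global maximum of $\widetilde W_{1,0}(\cdot;D)$; (ii) if $\lambda_1+\lambda_2\le2$, $R^{(1)}$ is the global minimum; (iii) if $\lambda_1+\lambda_2>2$, $R^{(3)}_\pm$ are the global minima.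
   Context: $\mathrm{sym}(Y)=\tfrac12(Y+Y^T)$, $\|Y\|^2=\mathrm{tr}(Y^TY)$ (Frobenius norm). For an invertible matrix $G$, $\widetilde W_{1,0}(R;G)=\|\mathrm{sym}(R^TG-\mathbb I_n)\|^2$ for $R\in SO(n)$. *)

theory Defs
  imports "HOL-Analysis.Analysis"
begin

definition msym :: "real^'n^'n \<Rightarrow> real^'n^'n" where
  "msym Y = (1/2) *\<^sub>R (Y + transpose Y)"

definition frob_sq :: "real^'n^'n \<Rightarrow> real" where
  "frob_sq Y = trace (transpose Y ** Y)"

definition SO :: "(real^'n^'n) set" where
  "SO = {R. orthogonal_matrix R \<and> det R = 1}"

definition W10 :: "real^'n^'n \<Rightarrow> real^'n^'n \<Rightarrow> real" where
  "W10 R G = frob_sq (msym (transpose R ** G - mat 1))"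

definition critical_point_on ::
  "('a::real_normed_vector \<Rightarrow> real) \<Rightarrow> 'a set \<Rightarrow> 'a \<Rightarrow> bool" where
  "critical_point_on f M x \<longleftrightarrow> x \<in> M \<and>
     (\<forall>\<gamma> v. (\<forall>t. \<gamma> t \<in> M) \<and> \<gamma> 0 = x \<and> (\<gamma> has_vector_derivative v) (at 0)
        \<longrightarrow> ((\<lambda>t. f (\<gamma> t)) has_real_derivative 0) (at 0))"

definition mat2 :: "real \<Rightarrow> real \<Rightarrow> real \<Rightarrow> real \<Rightarrow> real^2^2" where
  "mat2 a b c d = (\<chi> i j. if i = 1 then (if j = 1 then a else b)
                               else (if j = 1 then c else d))"

end

theory Submission
  imports Defs
begin

text \<open>Every \<open>R \<in> SO(2)\<close> is a rotation \<open>[[a,-b],[b,a]]\<close> with \<open>a\<^sup>2 + b\<^sup>2 = 1\<close>, and for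
  \<open>D = diag(\<lambda>\<^sub>1,\<lambda>\<^sub>2)\<close> a direct computation gives
  \<open>W(R;D) = ((\<lambda>\<^sub>1+\<lambda>\<^sub>2) a - 2)\<^sup>2/2 + (\<lambda>\<^sub>1-\<lambda>\<^sub>2)\<^sup>2/2\<close>: the energy only depends on the entry
  \<open>a = R\<^sub>1\<^sub>1\<close>, which ranges over \<open>[-1,1]\<close>. Along a rotation curve through \<open>R\<close> the derivative of
  \<open>W\<close> is \<open>-b\<close> times the derivative of this quadratic at \<open>a\<close>, so \<open>R\<close> is critical iff \<open>a = \<plusminus>1\<close> or
  \<open>a = 2/(\<lambda>\<^sub>1+\<lambda>\<^sub>2)\<close>, the vertex of the parabola. The global extrema are those of the
  quadratic on \<open>[-1,1]\<close>: the maximum is at \<open>a = -1\<close>, the minimum at \<open>a = 1\<close> when the vertex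
  lies outside the interval and at the vertex otherwise.\<close>

lemma mat2_nth [simp]:
  "mat2 a b c d $ 1 $ 1 = a" "mat2 a b c d $ 1 $ 2 = b"
  "mat2 a b c d $ 2 $ 1 = c" "mat2 a b c d $ 2 $ 2 = d"
  by (simp_all add: mat2_def)

lemma mat2_eta: "mat2 (M $ 1 $ 1) (M $ 1 $ 2) (M $ 2 $ 1) (M $ 2 $ 2) = (M :: real^2^2)"
  by (simp add: vec_eq_iff forall_2)

definition rot2 :: "real \<Rightarrow> real \<Rightarrow> real^2^2" where
  "rot2 a b = mat2 a (- b) b a"

lemma rot2_nth [simp]: "rot2 a b $ 1 $ 1 = a" "rot2 a b $ 2 $ 1 = b"
  by (simp_all add: rot2_def)

lemma rot2_1_0 [simp]: "rot2 1 0 = mat 1"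
  and rot2_minus_1_0 [simp]: "rot2 (- 1) 0 = - mat 1"
  by (simp_all add: rot2_def mat2_def vec_eq_iff forall_2 mat_def)

lemma SO2_iff_rot2: "R \<in> SO \<longleftrightarrow> (\<exists>a b. a\<^sup>2 + b\<^sup>2 = 1 \<and> R = rot2 a b)"
proof
  assume "R \<in> SO"
  then have orth: "transpose R ** R = mat 1" and det: "det R = 1"
    by (auto simp: SO_def orthogonal_matrix_def)
  have col1: "(R$1$1)\<^sup>2 + (R$2$1)\<^sup>2 = 1" and col2: "(R$1$2)\<^sup>2 + (R$2$2)\<^sup>2 = 1"
    using orth unfolding vec_eq_iff forall_2
    by (auto simp: transpose_def matrix_matrix_mult_def sum_2 mat_def power2_eq_square)
  have "R$1$1 * R$2$2 - R$1$2 * R$2$1 = 1"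
    using det by (simp add: det_2)
  then have "(R$1$1 - R$2$2)\<^sup>2 + (R$1$2 + R$2$1)\<^sup>2 = 0"
    using col1 col2 by (simp add: power2_eq_square algebra_simps)
  then have "R$2$2 = R$1$1" "R$1$2 = - R$2$1"
    by (simp_all add: sum_power2_eq_zero_iff eq_neg_iff_add_eq_0)
  then have "R = rot2 (R$1$1) (R$2$1)"
    by (metis mat2_eta rot2_def)
  with col1 show "\<exists>a b. a\<^sup>2 + b\<^sup>2 = 1 \<and> R = rot2 a b"
    by blast
next
  assume "\<exists>a b. a\<^sup>2 + b\<^sup>2 = 1 \<and> R = rot2 a b"
  then show "R \<in> SO"
    by (auto simp: SO_def orthogonal_matrix_def vec_eq_iff forall_2 det_2 rot2_def mat2_def
        transpose_def matrix_matrix_mult_def sum_2 mat_def power2_eq_square algebra_simps)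
qed

lemma SO2_eq_rot2:
  assumes "R \<in> SO"
  shows "R = rot2 (R$1$1) (R$2$1)" and "(R$1$1)\<^sup>2 + (R$2$1)\<^sup>2 = 1"
  using assms by (auto simp: SO2_iff_rot2)

lemma SO2_entry_abs_le_1:
  fixes R :: "real^2^2"
  assumes "R \<in> SO"
  shows "\<bar>R$1$1\<bar> \<le> 1"
proof -
  have "(R$1$1)\<^sup>2 \<le> 1"
    using SO2_eq_rot2(2)[OF assms] zero_le_power2[of "R$2$1"] by linarith
  then show ?thesis
    by (simp add: abs_square_le_1)
qed

lemma SO2_entry_eq_iff:
  assumes "\<bar>a\<bar> \<le> 1"
  shows "R \<in> SO \<and> R$1$1 = a \<longleftrightarrow> R \<in> {rot2 a (sqrt (1 - a\<^sup>2)), rot2 a (- sqrt (1 - a\<^sup>2))}"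
proof -
  have "a\<^sup>2 \<le> 1"
    using assms by (simp add: abs_square_le_1)
  then have "(R$2$1)\<^sup>2 = 1 - a\<^sup>2 \<longleftrightarrow> R$2$1 = sqrt (1 - a\<^sup>2) \<or> R$2$1 = - sqrt (1 - a\<^sup>2)"
    using power2_eq_iff[of "R$2$1" "sqrt (1 - a\<^sup>2)"] by simp
  then show ?thesis
    using \<open>a\<^sup>2 \<le> 1\<close> by (auto simp: SO2_iff_rot2 rot2_def mat2_def vec_eq_iff forall_2)
qed

lemma SO2_entry_image: "(\<lambda>R::real^2^2. R$1$1) ` SO = {-1..1}"
proof
  show "(\<lambda>R::real^2^2. R$1$1) ` SO \<subseteq> {-1..1}"
    using SO2_entry_abs_le_1 by (auto simp: abs_le_iff)
  show "{-1..1} \<subseteq> (\<lambda>R::real^2^2. R$1$1) ` SO"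
  proof
    fix a :: real
    assume "a \<in> {-1..1}"
    then have "rot2 a (sqrt (1 - a\<^sup>2)) \<in> SO \<and> rot2 a (sqrt (1 - a\<^sup>2)) $1$1 = a"
      using SO2_entry_eq_iff[of a "rot2 a (sqrt (1 - a\<^sup>2))"] by (simp add: abs_le_iff)
    then show "a \<in> (\<lambda>R::real^2^2. R$1$1) ` SO"
      by force
  qed
qed

lemma SO2_entry_fibre:
  assumes "\<bar>a\<bar> \<le> 1"
  shows "{R \<in> SO. R$1$1 \<in> {a}} = {rot2 a (sqrt (1 - a\<^sup>2)), rot2 a (- sqrt (1 - a\<^sup>2))}"
  using SO2_entry_eq_iff[OF assms] by auto

lemma SO2_entry_fibre_1: "{R \<in> SO. R$1$1 \<in> {1}} = {mat 1 :: real^2^2}"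
  and SO2_entry_fibre_minus_1: "{R \<in> SO. R$1$1 \<in> {-1}} = {- mat 1 :: real^2^2}"
  using SO2_entry_fibre[of 1] SO2_entry_fibre[of "-1"] by simp_all

lemma has_vector_derivative_matrix_entry:
  fixes \<gamma> :: "real \<Rightarrow> real^'n^'m"
  assumes "(\<gamma> has_vector_derivative v) F"
  shows "((\<lambda>t. \<gamma> t $ i $ j) has_real_derivative v $ i $ j) F"
  unfolding has_real_derivative_iff_has_vector_derivative
  by (intro bounded_linear.has_vector_derivative[OF bounded_linear_vec_nth] assms)

lemma SO2_extremal_entry:
  fixes F :: "real^2^2 \<Rightarrow> real"
  assumes F: "\<forall>R\<in>SO. F R = g (R$1$1)"
  shows "{R \<in> SO. \<forall>S\<in>SO. P (F R) (F S)}
    = {R \<in> SO. R$1$1 \<in> {a \<in> {-1..1}. \<forall>b\<in>{-1..1}. P (g a) (g b)}}"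
proof -
  have "(\<forall>S\<in>SO. P (F R) (F S)) \<longleftrightarrow> (\<forall>b\<in>{-1..1}. P (g (R$1$1)) (g b))" if "R \<in> SO" for R
    using F that unfolding SO2_entry_image[symmetric] by auto
  then show ?thesis
    using SO2_entry_image by auto
qed

lemma critical_point_on_SO2_entry_iff:
  fixes F :: "real^2^2 \<Rightarrow> real"
  assumes F: "\<forall>R\<in>SO. F R = g (R$1$1)"
    and g': "\<And>a. (g has_real_derivative g' a) (at a)"
  shows "critical_point_on F SO R \<longleftrightarrow> R \<in> SO \<and> (\<bar>R$1$1\<bar> = 1 \<or> g' (R$1$1) = 0)"
proof (cases "R \<in> SO")
  case True
  define a b where "a = R$1$1" and "b = R$2$1"
  have ab: "a\<^sup>2 + b\<^sup>2 = 1" and R: "R = rot2 a b"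
    using SO2_eq_rot2[OF True] by (simp_all add: a_def b_def)
  show ?thesis
  proof
    assume crit: "critical_point_on F SO R"
    define \<gamma> where "\<gamma> t = cos t *\<^sub>R rot2 a b + sin t *\<^sub>R rot2 (- b) a" for t
    have \<gamma>_eq: "\<gamma> t = rot2 (a * cos t - b * sin t) (b * cos t + a * sin t)" for t
      by (simp add: \<gamma>_def rot2_def mat2_def vec_eq_iff forall_2 algebra_simps)
    have "(a * cos t - b * sin t)\<^sup>2 + (b * cos t + a * sin t)\<^sup>2 = (a\<^sup>2 + b\<^sup>2) * ((sin t)\<^sup>2 + (cos t)\<^sup>2)" for t
      by algebra
    then have \<gamma>_SO: "\<gamma> t \<in> SO" for t
      using ab \<gamma>_eq SO2_iff_rot2 by auto
    have "(\<gamma> has_vector_derivative rot2 (- b) a) (at 0)"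
      unfolding \<gamma>_def[abs_def] by (auto intro!: derivative_eq_intros DERIV_cos DERIV_sin)
    moreover have "\<gamma> 0 = R"
      using R by (simp add: \<gamma>_def)
    ultimately have "((\<lambda>t. F (\<gamma> t)) has_real_derivative 0) (at 0)"
      using crit \<gamma>_SO unfolding critical_point_on_def by blast
    moreover have "(\<lambda>t. F (\<gamma> t)) = (\<lambda>t. g (a * cos t - b * sin t))"
      using F \<gamma>_SO \<gamma>_eq by auto
    moreover have "((\<lambda>t. g (a * cos t - b * sin t)) has_real_derivative g' a * - b) (at 0)"
      by (rule DERIV_chain2) (auto intro!: derivative_eq_intros g')
    ultimately have "g' a * b = 0"
      using DERIV_unique by fastforce
    then have "b = 0 \<or> g' a = 0"
      by auto
    then show "R \<in> SO \<and> (\<bar>R$1$1\<bar> = 1 \<or> g' (R$1$1) = 0)"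
      using ab True by (auto simp: a_def power2_eq_1_iff)
  next
    assume crit_cond: "R \<in> SO \<and> (\<bar>R$1$1\<bar> = 1 \<or> g' (R$1$1) = 0)"
    show "critical_point_on F SO R"
      unfolding critical_point_on_def
    proof (intro conjI allI impI True)
      fix \<gamma> :: "real \<Rightarrow> real^2^2" and v
      assume \<gamma>: "(\<forall>t. \<gamma> t \<in> SO) \<and> \<gamma> 0 = R \<and> (\<gamma> has_vector_derivative v) (at 0)"
      define e where "e t = \<gamma> t $1$1" for t
      have e': "(e has_real_derivative v$1$1) (at 0)"
        unfolding e_def[abs_def] using \<gamma> by (intro has_vector_derivative_matrix_entry) simp
      have e_bounded: "-1 \<le> e t \<and> e t \<le> 1" for t
        unfolding e_def using \<gamma> SO2_entry_abs_le_1 by (simp add: abs_le_iff)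
      have "g' (e 0) * v$1$1 = 0"
      proof (cases "\<bar>e 0\<bar> = 1")
        \<comment> \<open>the entry curve \<open>e\<close> stays in \<open>[-1,1]\<close>, so it is extremal at \<open>0\<close>\<close>
        case True
        then have "e 0 = 1 \<or> e 0 = -1"
          by linarith
        then have "v$1$1 = 0"
        proof
          assume "e 0 = 1"
          show "v$1$1 = 0"
            by (rule DERIV_local_max[OF e' zero_less_one]) (use e_bounded \<open>e 0 = 1\<close> in auto)
        next
          assume "e 0 = -1"
          show "v$1$1 = 0"
            by (rule DERIV_local_min[OF e' zero_less_one]) (use e_bounded \<open>e 0 = -1\<close> in auto)
        qed
        then show ?thesis
          by simp
      next
        case False
        then show ?thesis
          using crit_cond \<gamma> by (simp add: e_def)
      qed
      moreover have "((\<lambda>t. g (e t)) has_real_derivative g' (e 0) * v$1$1) (at 0)"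
        by (rule DERIV_chain2[OF g' e'])
      moreover have "(\<lambda>t. F (\<gamma> t)) = (\<lambda>t. g (e t))"
        using F \<gamma> by (auto simp: e_def)
      ultimately show "((\<lambda>t. F (\<gamma> t)) has_real_derivative 0) (at 0)"
        by metis
    qed
  qed
qed (simp add: critical_point_on_def)

lemma unique_extremum_set:
  assumes "x \<in> A" and "\<And>b. b \<in> A \<Longrightarrow> P x b" and "\<And>a. a \<in> A \<Longrightarrow> P a x \<Longrightarrow> a = x"
  shows "{a \<in> A. \<forall>b\<in>A. P a b} = {x}"
  using assms by blast

lemma interval_argmax_quadratic:
  fixes s :: real
  assumes "0 < s"
  shows "{a \<in> {-1..1}. \<forall>b\<in>{-1..1}. (s * b - 2)\<^sup>2 \<le> (s * a - 2)\<^sup>2} = {-1}"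
proof -
  have gap: "(s * (-1) - 2)\<^sup>2 - (s * b - 2)\<^sup>2 = (b + 1) * (s * (4 - s * (b - 1)))" for b
    by (simp add: power2_eq_square algebra_simps)
  have pos: "0 < s * (4 - s * (b - 1))" if "b \<le> 1" for b
  proof -
    have "s * (b - 1) \<le> 0"
      using assms that by (simp add: mult_nonneg_nonpos)
    then show ?thesis
      using assms by simp
  qed
  have "(s * b - 2)\<^sup>2 \<le> (s * (-1) - 2)\<^sup>2" if "b \<in> {-1..1}" for b
  proof -
    have "0 \<le> b + 1" and "b \<le> 1"
      using that by auto
    then have "0 \<le> (b + 1) * (s * (4 - s * (b - 1)))"
      by (metis mult_nonneg_nonneg less_imp_le pos)
    then show ?thesis
      using gap[of b] by linarith
  qed
  moreover have "a = -1" if "a \<in> {-1..1}" "(s * (-1) - 2)\<^sup>2 \<le> (s * a - 2)\<^sup>2" for a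
  proof -
    have nonpos: "(a + 1) * (s * (4 - s * (a - 1))) \<le> 0"
      using gap[of a] that(2) by linarith
    have "a + 1 \<le> 0"
    proof (rule ccontr)
      assume "\<not> a + 1 \<le> 0"
      then have "0 < (a + 1) * (s * (4 - s * (a - 1)))"
        using that(1) by (intro mult_pos_pos pos) auto
      then show False
        using nonpos by linarith
    qed
    then show ?thesis
      using that(1) by simp
  qed
  ultimately show ?thesis
    by (intro unique_extremum_set) auto
qed

lemma interval_argmin_quadratic_small:
  fixes s :: real
  assumes "0 < s" and "s \<le> 2"
  shows "{a \<in> {-1..1}. \<forall>b\<in>{-1..1}. (s * a - 2)\<^sup>2 \<le> (s * b - 2)\<^sup>2} = {1}"
proof -
  have gap: "(s * b - 2)\<^sup>2 - (s * 1 - 2)\<^sup>2 = (1 - b) * (s * (4 - s * (b + 1)))" for b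
    by (simp add: power2_eq_square algebra_simps)
  have nonneg: "0 \<le> s * (4 - s * (b + 1))" if "b \<le> 1" for b
  proof -
    have "s * (b + 1) \<le> s * 2"
      using assms that by (intro mult_left_mono) simp_all
    then have "0 \<le> 4 - s * (b + 1)"
      using assms by linarith
    then show ?thesis
      using assms by (simp add: zero_le_mult_iff)
  qed
  have pos: "0 < s * (4 - s * (b + 1))" if "b < 1" for b
  proof -
    have "s * (b + 1) < s * 2"
      using assms that by (intro mult_strict_left_mono) simp_all
    then have "0 < 4 - s * (b + 1)"
      using assms by linarith
    then show ?thesis
      using assms by simp
  qed
  have "(s * 1 - 2)\<^sup>2 \<le> (s * b - 2)\<^sup>2" if "b \<in> {-1..1}" for b
  proof -
    have "0 \<le> (1 - b) * (s * (4 - s * (b + 1)))"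
      using that by (intro mult_nonneg_nonneg nonneg) auto
    then show ?thesis
      using gap[of b] by linarith
  qed
  moreover have "a = 1" if "a \<in> {-1..1}" "(s * a - 2)\<^sup>2 \<le> (s * 1 - 2)\<^sup>2" for a
  proof (rule ccontr)
    assume "a \<noteq> 1"
    then have "0 < (1 - a) * (s * (4 - s * (a + 1)))"
      using that(1) pos[of a] by simp
    then show False
      using gap[of a] that(2) by linarith
  qed
  ultimately show ?thesis
    by (intro unique_extremum_set) auto
qed

lemma interval_argmin_quadratic_large:
  fixes s :: real
  assumes "2 < s"
  shows "{a \<in> {-1..1}. \<forall>b\<in>{-1..1}. (s * a - 2)\<^sup>2 \<le> (s * b - 2)\<^sup>2} = {2 / s}"
proof -
  have c: "2 / s \<in> {-1..1}" and vertex: "s * (2 / s) - 2 = 0"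
    using assms by (simp_all add: field_simps)
  show ?thesis
  proof (intro set_eqI iffI)
    fix a
    assume "a \<in> {a \<in> {-1..1}. \<forall>b\<in>{-1..1}. (s * a - 2)\<^sup>2 \<le> (s * b - 2)\<^sup>2}"
    then have "(s * a - 2)\<^sup>2 \<le> (s * (2 / s) - 2)\<^sup>2"
      using c by blast
    then show "a \<in> {2 / s}"
      using assms by (simp add: vertex field_simps)
  qed (use c vertex in auto)
qed

lemma interval_critical_quadratic:
  fixes s :: real
  assumes "0 < s"
  shows "{a \<in> {-1..1}. \<bar>a\<bar> = 1 \<or> s * (s * a - 2) = 0} = {1, -1} \<union> (if 2 < s then {2 / s} else {})"
proof -
  have "s * (s * a - 2) = 0 \<longleftrightarrow> a = 2 / s" for a
    using assms by (auto simp: field_simps)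
  then have "{a \<in> {-1..1}. \<bar>a\<bar> = 1 \<or> s * (s * a - 2) = 0} = {1, -1} \<union> ({2 / s} \<inter> {-1..1})"
    by (auto simp: abs_eq_iff')
  also have "\<dots> = {1, -1} \<union> (if 2 < s then {2 / s} else {})"
  proof (cases "2 < s")
    case True
    then have "2 / s \<in> {-1..1}"
      by (simp add: field_simps)
    then show ?thesis
      using True by auto
  next
    case False
    then have "2 / s \<in> {-1..1} \<Longrightarrow> 2 / s = 1"
      using assms by (auto simp: field_simps)
    then show ?thesis
      using False by auto
  qed
  finally show ?thesis .
qed

lemma W10_diag:
  "W10 (R::real^2^2) (mat2 l1 0 0 l2)
    = (R$1$1 * l1 - 1)\<^sup>2 + (R$2$2 * l2 - 1)\<^sup>2 + (R$2$1 * l2 + R$1$2 * l1)\<^sup>2 / 2"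
  by (simp add: W10_def frob_sq_def msym_def trace_def transpose_def matrix_matrix_mult_def
      sum_2 mat_def power2_eq_square algebra_simps)

lemma W10_diag_SO2:
  assumes "R \<in> SO"
  shows "W10 R (mat2 l1 0 0 l2) = ((l1 + l2) * R$1$1 - 2)\<^sup>2 / 2 + (l1 - l2)\<^sup>2 / 2"
proof -
  obtain a b where ab: "a\<^sup>2 + b\<^sup>2 = 1" and R: "R = rot2 a b"
    using assms SO2_iff_rot2 by blast
  have "W10 (rot2 a b) (mat2 l1 0 0 l2)
      = ((l1 + l2) * a - 2)\<^sup>2 / 2 + (l1 - l2)\<^sup>2 / 2 + (l1 - l2)\<^sup>2 / 2 * (a\<^sup>2 + b\<^sup>2 - 1)"
    unfolding W10_diag rot2_def mat2_nth by (simp add: field_simps power2_eq_square; algebra)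
  then show ?thesis
    using ab R by simp
qed

lemma critical_points_W10_diag:
  assumes "0 < l1 + l2"
  shows "{R. critical_point_on (\<lambda>R. W10 R (mat2 l1 0 0 l2)) SO R}
    = {mat 1, - mat 1} \<union> (if 2 < l1 + l2 then {R \<in> SO. R$1$1 \<in> {2 / (l1 + l2)}} else {})"
proof -
  define s where "s = l1 + l2"
  have W: "\<forall>R\<in>SO. W10 R (mat2 l1 0 0 l2) = (s * R$1$1 - 2)\<^sup>2 / 2 + (l1 - l2)\<^sup>2 / 2"
    by (simp add: s_def W10_diag_SO2)
  have g': "((\<lambda>a. (s * a - 2)\<^sup>2 / 2 + (l1 - l2)\<^sup>2 / 2) has_real_derivative s * (s * a - 2)) (at a)" for a
    by (auto intro!: derivative_eq_intros)
  have "{R. critical_point_on (\<lambda>R. W10 R (mat2 l1 0 0 l2)) SO R}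
      = {R \<in> SO. R$1$1 \<in> {a \<in> {-1..1}. \<bar>a\<bar> = 1 \<or> s * (s * a - 2) = 0}}"
    using critical_point_on_SO2_entry_iff[OF W g'] SO2_entry_abs_le_1 by (auto simp: abs_le_iff)
  also have "\<dots> = {R \<in> SO. R$1$1 \<in> {1}} \<union> {R \<in> SO. R$1$1 \<in> {-1}}
      \<union> (if 2 < s then {R \<in> SO. R$1$1 \<in> {2 / s}} else {})"
    unfolding interval_critical_quadratic[OF assms[folded s_def]] by auto
  finally show ?thesis
    unfolding SO2_entry_fibre_1 SO2_entry_fibre_minus_1 s_def by auto
qed

lemma extremal_W10_diag:
  assumes "0 < l1 + l2"
  shows "{R \<in> SO. \<forall>S\<in>SO. W10 S (mat2 l1 0 0 l2) \<le> W10 R (mat2 l1 0 0 l2)} = {- mat 1}"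
    and "{R \<in> SO. \<forall>S\<in>SO. W10 R (mat2 l1 0 0 l2) \<le> W10 S (mat2 l1 0 0 l2)}
      = (if l1 + l2 \<le> 2 then {mat 1} else {R \<in> SO. R$1$1 \<in> {2 / (l1 + l2)}})"
proof -
  define s where "s = l1 + l2"
  define g where "g a = (s * a - 2)\<^sup>2 / 2 + (l1 - l2)\<^sup>2 / 2" for a
  have W: "\<forall>R\<in>SO. W10 R (mat2 l1 0 0 l2) = g (R$1$1)"
    by (simp add: g_def s_def W10_diag_SO2)
  have g_le: "g a \<le> g b \<longleftrightarrow> (s * a - 2)\<^sup>2 \<le> (s * b - 2)\<^sup>2" for a b
    by (simp add: g_def)
  have s: "0 < s"
    using assms by (simp add: s_def)
  show "{R \<in> SO. \<forall>S\<in>SO. W10 S (mat2 l1 0 0 l2) \<le> W10 R (mat2 l1 0 0 l2)} = {- mat 1}"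
    unfolding SO2_extremal_entry[OF W, of "\<lambda>x y. y \<le> x"] g_le interval_argmax_quadratic[OF s]
      SO2_entry_fibre_minus_1 ..
  have argmin: "{a \<in> {-1..1}. \<forall>b\<in>{-1..1}. (s * a - 2)\<^sup>2 \<le> (s * b - 2)\<^sup>2}
      = (if s \<le> 2 then {1} else {2 / s})"
  proof (cases "s \<le> 2")
    case True
    then show ?thesis
      using interval_argmin_quadratic_small[OF s True] by simp
  next
    case False
    then show ?thesis
      using interval_argmin_quadratic_large[of s] by simp
  qed
  have "{R \<in> SO. \<forall>S\<in>SO. W10 R (mat2 l1 0 0 l2) \<le> W10 S (mat2 l1 0 0 l2)}
      = {R \<in> SO. R$1$1 \<in> (if s \<le> 2 then {1} else {2 / s})}"
    unfolding SO2_extremal_entry[OF W, of "\<lambda>x y. x \<le> y"] g_le argmin ..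
  also have "\<dots> = (if s \<le> 2 then {mat 1} else {R \<in> SO. R$1$1 \<in> {2 / s}})"
    using SO2_entry_fibre_1 by (cases "s \<le> 2") auto
  finally show "{R \<in> SO. \<forall>S\<in>SO. W10 R (mat2 l1 0 0 l2) \<le> W10 S (mat2 l1 0 0 l2)}
      = (if l1 + l2 \<le> 2 then {mat 1} else {R \<in> SO. R$1$1 \<in> {2 / (l1 + l2)}})"
    unfolding s_def .
qed

theorem mainTheorem6:
  fixes l1 l2 :: real
  assumes "l1 \<ge> l2" and "l2 > 0"
  defines "D \<equiv> mat2 l1 0 0 l2"
    and "c \<equiv> 2 / (l1 + l2)"
  defines "R3p \<equiv> mat2 c (- sqrt (1 - c\<^sup>2)) (sqrt (1 - c\<^sup>2)) c"
    and "R3m \<equiv> mat2 c (sqrt (1 - c\<^sup>2)) (- sqrt (1 - c\<^sup>2)) c"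
  shows "({R. critical_point_on (\<lambda>R. W10 R D) SO R}
           = {mat 1, - mat 1} \<union> (if l1 + l2 > 2 then {R3p, R3m} else {})) \<and>
         W10 (mat 1) D = (l1 - 1)\<^sup>2 + (l2 - 1)\<^sup>2 \<and>
         W10 (- mat 1) D = (l1 + 1)\<^sup>2 + (l2 + 1)\<^sup>2 \<and>
         (l1 + l2 > 2 \<longrightarrow> W10 R3p D = (l1 - l2)\<^sup>2 / 2 \<and> W10 R3m D = (l1 - l2)\<^sup>2 / 2) \<and>
         {R \<in> SO. \<forall>S \<in> SO. W10 S D \<le> W10 R D} = {- mat 1} \<and>
         (l1 + l2 \<le> 2 \<longrightarrow> {R \<in> SO. \<forall>S \<in> SO. W10 R D \<le> W10 S D} = {mat 1}) \<and>
         (l1 + l2 > 2 \<longrightarrow> {R \<in> SO. \<forall>S \<in> SO. W10 R D \<le> W10 S D} = {R3p, R3m})"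
proof -
  have s: "0 < l1 + l2"
    using assms by simp
  have fibre_c: "{R \<in> SO. R$1$1 \<in> {2 / (l1 + l2)}} = {R3p, R3m}" if "2 < l1 + l2"
    using that by (subst SO2_entry_fibre) (auto simp: R3p_def R3m_def rot2_def c_def field_simps)
  have W_R3: "W10 R3p D = (l1 - l2)\<^sup>2 / 2 \<and> W10 R3m D = (l1 - l2)\<^sup>2 / 2" if "2 < l1 + l2"
  proof -
    have "R3p \<in> SO" "R3m \<in> SO"
      using fibre_c[OF that] by auto
    moreover have "(l1 + l2) * c = 2"
      using s unfolding c_def by (simp add: field_simps)
    ultimately show ?thesis
      by (simp add: D_def W10_diag_SO2 R3p_def R3m_def)
  qed
  have "W10 (mat 1) D = (l1 - 1)\<^sup>2 + (l2 - 1)\<^sup>2" "W10 (- mat 1) D = (l1 + 1)\<^sup>2 + (l2 + 1)\<^sup>2"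
    by (simp_all add: D_def W10_diag mat_def power2_eq_square algebra_simps)
  then show ?thesis
    using critical_points_W10_diag[OF s] extremal_W10_diag[OF s] fibre_c W_R3
    by (simp add: D_def)
qed

end
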